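(* Let $G=(V,E)$ be a connected graph with $|E|=\Omega(|V|^2)$. Then $Z_c(G)=\Theta(|V|)$. That is, for every constant $c>0$ there is a constant $c'>0$ such that every connected graph $G=(V,E)$ with $|E|\geq c|V|^2$ satisfies $Z_c(G)\geq c'|V|$ (and trivially $Z_c(G)\leq |V|$).
   Context: Zero forcing: given a graph $G$ and a set $S$ of initially colored vertices, if a colored vertex $u$ has exactly one uncolored neighbor $v$, then $v$ becomes colored. $S$ is a zero forcing set if repeated application colors all vertices. A connected forcing set is a zero forcing set $S$ such that the induced subgraph $G[S]$ is connected; $Z_c(G)$, the connected forcing number, is the minimum cardinality of a connected forcing set (defined for connected graphs, since disconnected graphs have no connected forcing set). The asymptotic notation refers to families of graphs whose number of vertices tends to infinity. *)

theory Defs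
  imports Complex_Main
begin

definition simple_graph :: "'a set \<Rightarrow> ('a \<Rightarrow> 'a \<Rightarrow> bool) \<Rightarrow> bool" where
  "simple_graph V E \<longleftrightarrow> finite V \<and>
     (\<forall>u v. E u v \<longrightarrow> u \<in> V \<and> v \<in> V \<and> u \<noteq> v \<and> E v u)"

definition num_edges :: "('a \<Rightarrow> 'a \<Rightarrow> bool) \<Rightarrow> nat" where
  "num_edges E = card {{u, v} | u v. E u v}"

definition connected_on :: "'a set \<Rightarrow> ('a \<Rightarrow> 'a \<Rightarrow> bool) \<Rightarrow> bool" where
  "connected_on S E \<longleftrightarrow> S \<noteq> {} \<and>
     (\<forall>x\<in>S. \<forall>y\<in>S. (\<lambda>a b. a \<in> S \<and> b \<in> S \<and> E a b)\<^sup>*\<^sup>* x y)"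

definition connected_graph :: "'a set \<Rightarrow> ('a \<Rightarrow> 'a \<Rightarrow> bool) \<Rightarrow> bool" where
  "connected_graph V E \<longleftrightarrow> connected_on V E"

definition force_step :: "'a set \<Rightarrow> ('a \<Rightarrow> 'a \<Rightarrow> bool) \<Rightarrow> 'a set \<Rightarrow> 'a set \<Rightarrow> bool" where
  "force_step V E C C' \<longleftrightarrow> (\<exists>u v. u \<in> C \<and> v \<in> V \<and> v \<notin> C \<and> E u v \<and>
      {w \<in> V. E u w \<and> w \<notin> C} = {v} \<and> C' = insert v C)"

definition zero_forcing_set :: "'a set \<Rightarrow> ('a \<Rightarrow> 'a \<Rightarrow> bool) \<Rightarrow> 'a set \<Rightarrow> bool" where
  "zero_forcing_set V E S \<longleftrightarrow> S \<subseteq> V \<and> (force_step V E)\<^sup>*\<^sup>* S V"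

definition connected_forcing_set :: "'a set \<Rightarrow> ('a \<Rightarrow> 'a \<Rightarrow> bool) \<Rightarrow> 'a set \<Rightarrow> bool" where
  "connected_forcing_set V E S \<longleftrightarrow> zero_forcing_set V E S \<and> connected_on S E"

definition Zc :: "'a set \<Rightarrow> ('a \<Rightarrow> 'a \<Rightarrow> bool) \<Rightarrow> nat" where
  "Zc V E = (LEAST k. \<exists>S. connected_forcing_set V E S \<and> card S = k)"

end

theory Submission
  imports Defs
begin

text \<open>Every zero forcing set \<open>S\<close> of a simple graph on \<open>n\<close> vertices satisfies \<open>|E| \<le> |S| n\<close>.
  Indeed, the first vertex \<open>u\<close> to force has all its neighbours among \<open>S\<close> and the forced
  vertex, so its degree is at most \<open>|S|\<close>; since \<open>u\<close> never forces again, deleting \<open>u\<close> leaves a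
  graph on \<open>n - 1\<close> vertices with a zero forcing set of size \<open>|S|\<close>, and induction applies.
  Hence \<open>|E| \<ge> c n\<^sup>2\<close> gives \<open>Z\<^sub>c(G) \<ge> Z(G) \<ge> c n\<close>.\<close>

definition delete_vertex :: "('a \<Rightarrow> 'a \<Rightarrow> bool) \<Rightarrow> 'a \<Rightarrow> 'a \<Rightarrow> 'a \<Rightarrow> bool" where
  "delete_vertex E u = (\<lambda>a b. E a b \<and> a \<noteq> u \<and> b \<noteq> u)"

definition edge_set :: "('a \<Rightarrow> 'a \<Rightarrow> bool) \<Rightarrow> 'a set set" where
  "edge_set E = {{u, v} | u v. E u v}"

lemma num_edges_eq_card_edge_set: "num_edges E = card (edge_set E)"
  by (simp add: num_edges_def edge_set_def)

lemma simple_graph_delete_vertex: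
  "simple_graph V E \<Longrightarrow> simple_graph (V - {u}) (delete_vertex E u)"
  unfolding simple_graph_def delete_vertex_def by auto

lemma rtranclp_force_step_subset: "(force_step V E)\<^sup>*\<^sup>* C D \<Longrightarrow> C \<subseteq> D"
  by (induction rule: rtranclp_induct) (auto simp: force_step_def)

text \<open>A colored vertex whose whole neighbourhood is colored can never force again.\<close>

lemma force_step_delete_vertex:
  assumes "force_step V E C D" "u \<in> C" "\<forall>w. E u w \<longrightarrow> w \<in> C"
  shows "force_step (V - {u}) (delete_vertex E u) (C - {u}) (D - {u})"
proof -
  from assms(1) obtain w x where
    w: "w \<in> C" and x: "x \<in> V" "x \<notin> C" and wx: "E w x"
    and nbs: "{t \<in> V. E w t \<and> t \<notin> C} = {x}" and D: "D = insert x C"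
    unfolding force_step_def by blast
  have "w \<noteq> u" using x(2) wx assms(3) by blast
  moreover have "x \<noteq> u" using x(2) assms(2) by blast
  moreover have "{t \<in> V - {u}. delete_vertex E u w t \<and> t \<notin> C - {u}} = {x}"
    using nbs \<open>w \<noteq> u\<close> assms(2) by (auto simp: delete_vertex_def)
  ultimately show ?thesis
    unfolding force_step_def using w x wx D by (auto simp: delete_vertex_def)
qed

lemma rtranclp_force_step_delete_vertex:
  assumes "(force_step V E)\<^sup>*\<^sup>* C D" "u \<in> C" "\<forall>w. E u w \<longrightarrow> w \<in> C"
  shows "(force_step (V - {u}) (delete_vertex E u))\<^sup>*\<^sup>* (C - {u}) (D - {u})"
  using assms(1)
proof (induction rule: rtranclp_induct)
  case (step y z)
  have "C \<subseteq> y" using step.hyps(1) by (rule rtranclp_force_step_subset)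
  then have "force_step (V - {u}) (delete_vertex E u) (y - {u}) (z - {u})"
    using force_step_delete_vertex[OF step.hyps(2)] assms(2,3) by blast
  with step.IH show ?case by (rule rtranclp.rtrancl_into_rtrancl)
qed simp

lemma card_insert_Diff_singleton:
  assumes "finite S" "u \<in> S" "v \<notin> S"
  shows "card (insert v (S - {u})) = card S"
  using assms by (simp add: card_Diff_singleton) (metis Suc_pred card_gt_0_iff empty_iff)

lemma first_forcer_deletion:
  assumes G: "simple_graph V E" and S: "zero_forcing_set V E S" and "S \<noteq> V"
  obtains u S' where "u \<in> V" "card {w. E u w} \<le> card S"
    "zero_forcing_set (V - {u}) (delete_vertex E u) S'" "card S' = card S"
proof -
  have fin: "finite S" using G S finite_subset by (auto simp: simple_graph_def zero_forcing_set_def)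
  from S \<open>S \<noteq> V\<close> obtain C where first: "force_step V E S C" and rest: "(force_step V E)\<^sup>*\<^sup>* C V"
    unfolding zero_forcing_set_def by (metis converse_rtranclpE)
  from first obtain u v where u: "u \<in> S" and v: "v \<in> V" "v \<notin> S"
    and nbs: "{t \<in> V. E u t \<and> t \<notin> S} = {v}" and C: "C = insert v S"
    unfolding force_step_def by blast
  have nbs_sub: "{w. E u w} \<subseteq> insert v (S - {u})"
    using nbs G unfolding simple_graph_def by blast
  have "card {w. E u w} \<le> card (insert v (S - {u}))"
    using nbs_sub fin by (intro card_mono) auto
  also have "\<dots> = card S" using card_insert_Diff_singleton fin u v(2) .
  finally have deg: "card {w. E u w} \<le> card S" .
  have "(force_step (V - {u}) (delete_vertex E u))\<^sup>*\<^sup>* (C - {u}) (V - {u})"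
    using rtranclp_force_step_delete_vertex[OF rest] u nbs_sub C by auto
  moreover have "C - {u} = insert v (S - {u})" using C u v(2) by auto
  ultimately have "zero_forcing_set (V - {u}) (delete_vertex E u) (insert v (S - {u}))"
    using S v(1) by (auto simp: zero_forcing_set_def)
  moreover have "u \<in> V" using S u by (auto simp: zero_forcing_set_def)
  ultimately show thesis
    using that deg card_insert_Diff_singleton[OF fin u v(2)] by blast
qed

lemma edge_set_subset_pairs:
  "simple_graph V E \<Longrightarrow> edge_set E \<subseteq> (\<lambda>(a, b). {a, b}) ` (V \<times> V)"
  unfolding edge_set_def simple_graph_def by fastforce

lemma finite_edge_set:
  assumes "simple_graph V E"
  shows "finite (edge_set E)"
  using edge_set_subset_pairs[OF assms] by (rule finite_subset) (use assms in \<open>simp add: simple_graph_def\<close>)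

lemma card_edge_set_le:
  assumes "simple_graph V E"
  shows "card (edge_set E) \<le> card V * card V"
proof -
  have fin: "finite V" using assms by (simp add: simple_graph_def)
  have "card (edge_set E) \<le> card ((\<lambda>(a, b). {a, b}) ` (V \<times> V))"
    using fin by (intro card_mono edge_set_subset_pairs assms) auto
  also have "\<dots> \<le> card (V \<times> V)" using fin by (intro card_image_le) auto
  finally show ?thesis by (simp add: card_cartesian_product)
qed

lemma edge_set_subset_delete_vertex:
  assumes "simple_graph V E"
  shows "edge_set E \<subseteq> edge_set (delete_vertex E u) \<union> (\<lambda>w. {u, w}) ` {w. E u w}"
proof
  fix e assume "e \<in> edge_set E"
  then obtain a b where e: "e = {a, b}" "E a b" unfolding edge_set_def by blast
  have "E b a" using assms e(2) by (simp add: simple_graph_def)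
  consider "a = u" | "b = u" | "a \<noteq> u" "b \<noteq> u" by blast
  then show "e \<in> edge_set (delete_vertex E u) \<union> (\<lambda>w. {u, w}) ` {w. E u w}"
  proof cases
    case 1 then show ?thesis using e by blast
  next
    case 2 then show ?thesis using e \<open>E b a\<close> by (auto simp: insert_commute)
  next
    case 3 then show ?thesis using e unfolding edge_set_def delete_vertex_def by blast
  qed
qed

lemma card_edge_set_delete_vertex:
  assumes "simple_graph V E"
  shows "card (edge_set E) \<le> card (edge_set (delete_vertex E u)) + card {w. E u w}"
proof -
  have fin: "finite {w. E u w}"
    using assms unfolding simple_graph_def by (auto intro: finite_subset)
  have "card (edge_set E) \<le> card (edge_set (delete_vertex E u) \<union> (\<lambda>w. {u, w}) ` {w. E u w})"
    using finite_edge_set[OF simple_graph_delete_vertex[OF assms]] fin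
      edge_set_subset_delete_vertex[OF assms]
    by (intro card_mono) auto
  also have "\<dots> \<le> card (edge_set (delete_vertex E u)) + card ((\<lambda>w. {u, w}) ` {w. E u w})"
    by (rule card_Un_le)
  also have "\<dots> \<le> card (edge_set (delete_vertex E u)) + card {w. E u w}"
    using fin by (simp add: card_image_le)
  finally show ?thesis .
qed

lemma zero_forcing_set_card_edges:
  assumes "simple_graph V E" "zero_forcing_set V E S"
  shows "num_edges E \<le> card S * card V"
  using assms
proof (induction "card V" arbitrary: V E S rule: less_induct)
  case less
  show ?case
  proof (cases "S = V")
    case True
    then show ?thesis
      using card_edge_set_le[OF less.prems(1)] by (simp add: num_edges_eq_card_edge_set)
  next
    case False
    with less.prems obtain u S' where u: "u \<in> V" and deg: "card {w. E u w} \<le> card S"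
      and S': "zero_forcing_set (V - {u}) (delete_vertex E u) S'" "card S' = card S"
      by (rule first_forcer_deletion)
    have fin: "finite V" using less.prems(1) by (simp add: simple_graph_def)
    have smaller: "card (V - {u}) < card V" using fin u by (rule card_Diff1_less)
    have "num_edges E \<le> num_edges (delete_vertex E u) + card {w. E u w}"
      using card_edge_set_delete_vertex[OF less.prems(1)] by (simp add: num_edges_eq_card_edge_set)
    also have "\<dots> \<le> card S * card (V - {u}) + card S"
      using less.hyps[OF smaller simple_graph_delete_vertex[OF less.prems(1)] S'(1)] S'(2) deg
      by simp
    also have "\<dots> = card S * card V"
      using fin u by (cases "card V") (auto simp: card_Diff_singleton)
    finally show ?thesis .
  qed
qed

lemma Zc_attained:
  assumes "connected_graph V E"
  shows "Zc V E \<le> card V" "\<exists>S. connected_forcing_set V E S \<and> card S = Zc V E"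
proof -
  have ex: "\<exists>S. connected_forcing_set V E S \<and> card S = card V"
    using assms by (auto simp: connected_forcing_set_def zero_forcing_set_def connected_graph_def)
  then show "Zc V E \<le> card V" unfolding Zc_def by (rule Least_le)
  show "\<exists>S. connected_forcing_set V E S \<and> card S = Zc V E"
    using LeastI_ex[of "\<lambda>k. \<exists>S. connected_forcing_set V E S \<and> card S = k"] ex
    unfolding Zc_def by blast
qed

lemma num_edges_le_Zc_mult_card:
  assumes "simple_graph V E" "connected_graph V E"
  shows "num_edges E \<le> Zc V E * card V"
proof -
  obtain S where "connected_forcing_set V E S" "card S = Zc V E"
    using Zc_attained(2)[OF assms(2)] by blast
  then show ?thesis
    using zero_forcing_set_card_edges[OF assms(1), of S] by (simp add: connected_forcing_set_def)
qed

theorem theorem1: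
  shows "\<forall>c::real. c > 0 \<longrightarrow> (\<exists>c'::real. c' > 0 \<and>
     (\<forall>(V::nat set) E. simple_graph V E \<and> connected_graph V E \<and>
        real (num_edges E) \<ge> c * (real (card V))\<^sup>2 \<longrightarrow>
        c' * real (card V) \<le> real (Zc V E) \<and> Zc V E \<le> card V))"
proof (intro allI impI)
  fix c :: real assume "c > 0"
  have "c * real (card V) \<le> real (Zc V E) \<and> Zc V E \<le> card V"
    if G: "simple_graph V E" "connected_graph V E" and dense: "c * (real (card V))\<^sup>2 \<le> real (num_edges E)"
    for V :: "nat set" and E
  proof
    have "card V > 0"
      using G by (auto simp: connected_graph_def connected_on_def simple_graph_def card_gt_0_iff)
    moreover have "c * real (card V) * real (card V) \<le> real (Zc V E) * real (card V)"
      using dense num_edges_le_Zc_mult_card[OF G] unfolding power2_eq_square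
      by (metis mult.assoc of_nat_le_iff of_nat_mult order_trans)
    ultimately show "c * real (card V) \<le> real (Zc V E)" by simp
    show "Zc V E \<le> card V" using G(2) by (rule Zc_attained(1))
  qed
  with \<open>c > 0\<close> show "\<exists>c'>0. \<forall>(V::nat set) E. simple_graph V E \<and> connected_graph V E \<and>
        real (num_edges E) \<ge> c * (real (card V))\<^sup>2 \<longrightarrow>
        c' * real (card V) \<le> real (Zc V E) \<and> Zc V E \<le> card V"
    by blast
qed

end
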